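(* Let $n\geqslant3$, $2<p<\infty$, $-1<\alpha<\infty$, $\frac1p+\frac1{p'}=1$ and $\phi(p)=\frac{p-2}{p-1}$. For every weight $\omega$, every $h\in L^{p'/\phi(p)}(\omega\,d\nu_\alpha)$ and every Euclidean ball $B\subset\partial\mathbb{B}_n$, \[ \left(\frac{1}{|\widehat{B}|_\alpha}\int_{\widehat{B}}h\,\omega\,d\nu_\alpha\right)\left(\frac{1}{|\widehat{B}|_\alpha}\int_{\widehat{B}}\big(S_{\omega,\alpha}(h)\,\omega\big)^{-1}d\nu_\alpha\right)\leqslant[\omega]_{p,\alpha}^{\frac{1}{p-1}}. \]
   Context: $\mathbb{B}_n$ is the real unit ball of $\mathbb{R}^n$, $\nu$ normalized Lebesgue measure, $d\nu_\alpha(x)=c_\alpha(1-|x|^2)^\alpha d\nu(x)$ with $\nu_\alpha(\mathbb{B}_n)=1$, $|E|_\alpha=\nu_\alpha(E)$. A weight is a non-negative integrable function on $\mathbb{B}_n$; $L^q(\omega d\nu_\alpha)$ is the weighted Lebesgue space with norm $(\int|f|^q\omega\,d\nu_\alpha)^{1/q}$. For $E\subset\partial\mathbb{B}_n$, $\widehat E=\{z\in\mathbb{B}_n:z/|z|\in E,\ 1-r<|z|<1\}$ with $r=\mathrm{diam}(E)/2$ (Euclidean). $[\omega]_{p,\alpha}=\sup_B\frac{\int_{\widehat B}\omega\,d\nu_\alpha}{|\widehat B|_\alpha}\left(\frac{\int_{\widehat B}\omega^{1-p'}d\nu_\alpha}{|\widehat B|_\alpha}\right)^{p-1}$ over Euclidean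 balls $B\subset\partial\mathbb{B}_n$. The maximal operator is $M_\alpha f(x)=\sup_{B}\frac{\chi_{\widehat B}(x)}{|\widehat B|_\alpha}\int_{\widehat B}|f|\,d\nu_\alpha$ (supremum over all balls $B\subset\partial\mathbb{B}_n$), and $S_{\omega,\alpha}(h)=\left(\frac{M_\alpha(|h|^{1/\phi(p)}\omega)}{\omega}\right)^{\phi(p)}$. *)

theory Defs
  imports "HOL-Analysis.Analysis"
begin

text \<open>Extended power x^e on [0,\<infinity>] with the conventions 0^e = \<infinity> and \<infinity>^e = 0 for e < 0,
  \<infinity>^e = \<infinity> for e > 0, x^0 = 1.\<close>
definition epowr :: "ennreal \<Rightarrow> real \<Rightarrow> ennreal" where
  "epowr x e =
     (if e = 0 then 1
      else if 0 < e then (if x = \<infinity> then \<infinity> else ennreal (enn2real x powr e))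
      else (if x = 0 then \<infinity> else if x = \<infinity> then 0 else ennreal (enn2real x powr e)))"

text \<open>Normalising constant: integral of (1-|x|^2)^\<alpha> over the unit ball w.r.t. Lebesgue measure.
  (The normalisation of \<nu> cancels, since \<nu>_\<alpha> is a probability measure on the ball.)\<close>
definition Zalpha :: "'n::finite itself \<Rightarrow> real \<Rightarrow> ennreal" where
  "Zalpha _ \<alpha> = (\<integral>\<^sup>+ x. indicator (ball (0::real^'n) 1) x * ennreal ((1 - (norm x)^2) powr \<alpha>) \<partial>lebesgue)"

definition nu_alpha :: "real \<Rightarrow> (real^'n::finite) measure" where
  "nu_alpha \<alpha> = density lebesgue
     (\<lambda>x. indicator (ball (0::real^'n) 1) x * ennreal ((1 - (norm x)^2) powr \<alpha>)
          / Zalpha TYPE('n::finite) \<alpha>)"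


definition sphere_balls :: "(real^'n) set set" where
  "sphere_balls = {ball \<xi> \<delta> \<inter> sphere 0 1 | \<xi> \<delta>. norm \<xi> = 1 \<and> 0 < \<delta>}"

definition tent :: "(real^'n) set \<Rightarrow> (real^'n) set" where
  "tent E = {z. (1 / norm z) *\<^sub>R z \<in> E \<and> 1 - diameter E / 2 < norm z \<and> norm z < 1}"

definition eavg :: "real \<Rightarrow> (real^'n) set \<Rightarrow> (real^'n \<Rightarrow> ennreal) \<Rightarrow> ennreal" where
  "eavg \<alpha> T f = (\<integral>\<^sup>+ x\<in>T. f x \<partial>nu_alpha \<alpha>) / emeasure (nu_alpha \<alpha>) T"

definition Bchar :: "real \<Rightarrow> real \<Rightarrow> (real^'n \<Rightarrow> real) \<Rightarrow> ennreal" where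
  "Bchar p \<alpha> \<omega> = (let p' = p / (p - 1) in
     (SUP B\<in>sphere_balls. eavg \<alpha> (tent B) (\<lambda>x. ennreal (\<omega> x))
        * epowr (eavg \<alpha> (tent B) (\<lambda>x. epowr (ennreal (\<omega> x)) (1 - p'))) (p - 1)))"

definition Malpha :: "real \<Rightarrow> (real^'n \<Rightarrow> ennreal) \<Rightarrow> real^'n \<Rightarrow> ennreal" where
  "Malpha \<alpha> f x = (SUP B\<in>sphere_balls. indicator (tent B) x * eavg \<alpha> (tent B) f)"

definition phi :: "real \<Rightarrow> real" where
  "phi p = (p - 2) / (p - 1)"

definition Sop :: "real \<Rightarrow> real \<Rightarrow> (real^'n \<Rightarrow> real) \<Rightarrow> (real^'n \<Rightarrow> real) \<Rightarrow> real^'n \<Rightarrow> ennreal" where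
  "Sop p \<alpha> \<omega> h x =
     epowr (Malpha \<alpha> (\<lambda>y. epowr (ennreal \<bar>h y\<bar>) (1 / phi p) * ennreal (\<omega> y)) x / ennreal (\<omega> x))
           (phi p)"

definition weight :: "(real^'n \<Rightarrow> real) \<Rightarrow> bool" where
  "weight \<omega> \<longleftrightarrow> (\<forall>x\<in>ball 0 1. 0 \<le> \<omega> x) \<and> set_integrable lebesgue (ball 0 1) \<omega>"

definition in_Lq_w :: "real \<Rightarrow> real \<Rightarrow> (real^'n \<Rightarrow> real) \<Rightarrow> (real^'n \<Rightarrow> real) \<Rightarrow> bool" where
  "in_Lq_w q \<alpha> \<omega> h \<longleftrightarrow>
     (\<lambda>x. indicator (ball 0 1) x * h x) \<in> borel_measurable lebesgue \<and>
     (\<integral>\<^sup>+ x. ennreal (\<bar>h x\<bar> powr q * \<omega> x) \<partial>nu_alpha \<alpha>) < \<infinity>"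

end

theory Submission
  imports Defs
begin

text \<open>
  Write \<open>\<langle>f\<rangle>\<close> for the \<open>\<nu>\<^sub>\<alpha>\<close>-average over the tent \<open>T\<close> of \<open>B\<close>, and \<open>\<phi> = \<phi>(p)\<close>, so that
  \<open>1 - \<phi> = 1/(p-1)\<close> and \<open>\<phi> - 1 = 1 - p'\<close>. Hoelder's inequality with exponents \<open>1/\<phi>\<close> and
  \<open>1/(1-\<phi>)\<close> gives \<open>\<langle>h \<omega>\<rangle> \<le> a^\<phi> \<langle>\<omega>\<rangle>^(1-\<phi>)\<close>, where \<open>a = \<langle>|h|^(1/\<phi>) \<omega>\<rangle>\<close>. On \<open>T\<close> the
  maximal function of \<open>|h|^(1/\<phi>) \<omega>\<close> is at least its average \<open>a\<close>, hence
  \<open>(S(h) \<omega>)^(-1) \<le> a^(-\<phi>) \<omega>^(1-p')\<close> on \<open>T\<close>. In the product of the two averages the powers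
  of \<open>a\<close> cancel, leaving \<open>\<langle>\<omega>\<rangle>^(1/(p-1)) \<langle>\<omega>^(1-p')\<rangle> = (\<langle>\<omega>\<rangle> \<langle>\<omega>^(1-p')\<rangle>^(p-1))^(1/(p-1))\<close>,
  which is one term of the supremum defining \<open>[\<omega>]\<^sub>p\<^sub>,\<^sub>\<alpha>\<close>.
\<close>

lemma Youngs_inequality_scaled:
  fixes t c \<phi> :: real
  assumes t: "0 \<le> t" and c: "0 < c" and \<phi>: "0 < \<phi>" "\<phi> < 1"
  shows "t \<le> \<phi> * c powr (\<phi> - 1) * t powr (1 / \<phi>) + (1 - \<phi>) * c powr \<phi>"
proof (cases "t = 0")
  case False
  with t have t: "0 < t" by simp
  have "(t powr (1 / \<phi>) / c) powr \<phi> * 1 powr (1 - \<phi>) \<le> \<phi> * (t powr (1 / \<phi>) / c) + (1 - \<phi>) * 1"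
    using \<phi> t c by (intro Youngs_inequality_0) auto
  then have "t / c powr \<phi> \<le> \<phi> * (t powr (1 / \<phi>) / c) + (1 - \<phi>)"
    using \<phi> t c by (simp add: powr_divide powr_powr)
  then have "t \<le> (\<phi> * (t powr (1 / \<phi>) / c) + (1 - \<phi>)) * c powr \<phi>"
    using c by (simp add: divide_le_eq)
  also have "\<dots> = \<phi> * c powr (\<phi> - 1) * t powr (1 / \<phi>) + (1 - \<phi>) * c powr \<phi>"
    using c by (simp add: powr_diff field_simps)
  finally show ?thesis .
qed (use \<phi> c in simp)

lemma powr_le_one_plus_powr:
  fixes t q r :: real
  assumes "0 \<le> t" "0 \<le> q" "q \<le> r"
  shows "t powr q \<le> 1 + t powr r"
proof (cases "t \<le> 1")
  case True
  then have "t powr q \<le> 1" using assms by (intro powr_le1) auto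
  then show ?thesis by (smt (verit) powr_ge_zero)
next
  case False
  then have "t powr q \<le> t powr r" using assms by (intro powr_mono) auto
  then show ?thesis by simp
qed

lemma ennreal_set_lebesgue_integral_le:
  fixes f :: "'a \<Rightarrow> real"
  shows "ennreal (\<integral>x\<in>T. f x \<partial>M) \<le> (\<integral>\<^sup>+x\<in>T. ennreal \<bar>f x\<bar> \<partial>M)"
proof (cases "set_integrable M T f")
  case True
  have "ennreal (\<integral>x\<in>T. f x \<partial>M) \<le> ennreal (norm (\<integral>x\<in>T. f x \<partial>M))"
    by (intro ennreal_leI) simp
  also have "\<dots> \<le> (\<integral>\<^sup>+x. norm (indicator T x *\<^sub>R f x) \<partial>M)"
    using integral_norm_bound_ennreal True
    unfolding set_lebesgue_integral_def set_integrable_def by blast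
  also have "\<dots> = (\<integral>\<^sup>+x\<in>T. ennreal \<bar>f x\<bar> \<partial>M)"
    by (intro nn_integral_cong) (simp split: split_indicator)
  finally show ?thesis .
next
  case False
  then show ?thesis
    by (simp add: set_lebesgue_integral_def set_integrable_def not_integrable_integral_eq)
qed

lemma nn_set_integral_Holder_weight:
  fixes f w :: "'a \<Rightarrow> real"
  assumes [measurable]: "f \<in> borel_measurable M" "w \<in> borel_measurable M" "T \<in> sets M"
    and w: "\<forall>x\<in>T. 0 \<le> w x" and \<phi>: "0 < \<phi>" "\<phi> < 1"
    and X: "(\<integral>\<^sup>+x\<in>T. ennreal (\<bar>f x\<bar> powr (1 / \<phi>) * w x) \<partial>M) = ennreal X"
    and Y: "(\<integral>\<^sup>+x\<in>T. ennreal (w x) \<partial>M) = ennreal Y" and XY: "0 < X" "0 < Y"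
  shows "(\<integral>\<^sup>+x\<in>T. ennreal (\<bar>f x\<bar> * w x) \<partial>M) \<le> ennreal (X powr \<phi> * Y powr (1 - \<phi>))"
proof -
  define c where "c = X / Y"
  define c1 where "c1 = \<phi> * c powr (\<phi> - 1)"
  define c2 where "c2 = (1 - \<phi>) * c powr \<phi>"
  have c: "0 < c" "0 \<le> c1" "0 \<le> c2" using \<phi> XY by (auto simp: c_def c1_def c2_def)
  \<comment> \<open>Young's inequality at the scale \<open>c = X / Y\<close>, where the integrated bound is exactly \<open>X^\<phi> Y^(1-\<phi>)\<close>\<close>
  have "ennreal (\<bar>f x\<bar> * w x) * indicator T x \<le>
      ennreal c1 * (ennreal (\<bar>f x\<bar> powr (1 / \<phi>) * w x) * indicator T x)
      + ennreal c2 * (ennreal (w x) * indicator T x)" for x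
  proof (cases "x \<in> T")
    case True
    have "\<bar>f x\<bar> * w x \<le> (c1 * \<bar>f x\<bar> powr (1 / \<phi>) + c2) * w x"
      using Youngs_inequality_scaled[of "\<bar>f x\<bar>" c \<phi>] \<phi> c w True
      by (intro mult_right_mono) (auto simp: c1_def c2_def)
    also have "\<dots> = c1 * (\<bar>f x\<bar> powr (1 / \<phi>) * w x) + c2 * w x"
      by (simp add: algebra_simps)
    finally have "ennreal (\<bar>f x\<bar> * w x) \<le> ennreal (c1 * (\<bar>f x\<bar> powr (1 / \<phi>) * w x) + c2 * w x)"
      by (rule ennreal_leI)
    also have "\<dots> = ennreal c1 * ennreal (\<bar>f x\<bar> powr (1 / \<phi>) * w x) + ennreal c2 * ennreal (w x)"
      using c w True by (simp add: ennreal_mult)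
    finally show ?thesis using True by simp
  qed simp
  then have "(\<integral>\<^sup>+x\<in>T. ennreal (\<bar>f x\<bar> * w x) \<partial>M) \<le> (\<integral>\<^sup>+x. ennreal c1 * (ennreal (\<bar>f x\<bar> powr (1 / \<phi>) * w x) * indicator T x)
      + ennreal c2 * (ennreal (w x) * indicator T x) \<partial>M)"
    by (rule nn_integral_mono)
  also have "\<dots> = ennreal c1 * ennreal X + ennreal c2 * ennreal Y"
    by (simp add: nn_integral_add nn_integral_cmult X Y)
  also have "\<dots> = ennreal (c1 * X + c2 * Y)"
    using c XY by (simp add: ennreal_plus ennreal_mult)
  also have "c1 * X + c2 * Y = X powr \<phi> * Y powr (1 - \<phi>)"
    using XY by (simp add: c1_def c2_def c_def powr_diff powr_divide field_simps)
  finally show ?thesis .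
qed

lemma nn_set_integral_pos_transfer:
  fixes f g :: "'a \<Rightarrow> ennreal"
  assumes [measurable]: "f \<in> borel_measurable M" "g \<in> borel_measurable M" "T \<in> sets M"
    and zero: "\<forall>x\<in>T. g x = 0 \<longrightarrow> f x = 0"
    and pos: "0 < (\<integral>\<^sup>+x\<in>T. f x \<partial>M)"
  shows "0 < (\<integral>\<^sup>+x\<in>T. g x \<partial>M)"
proof (rule ccontr)
  assume "\<not> ?thesis"
  then have "(\<integral>\<^sup>+x\<in>T. g x \<partial>M) = 0"
    by simp
  then have "AE x in M. g x * indicator T x = 0"
    by (subst (asm) nn_integral_0_iff_AE) auto
  then have "AE x in M. f x * indicator T x = 0"
    by eventually_elim (use zero in \<open>auto split: split_indicator\<close>)
  then have "(\<integral>\<^sup>+x\<in>T. f x \<partial>M) = 0"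
    by (subst nn_integral_0_iff_AE) auto
  with pos show False by simp
qed

lemma nn_set_integral_powr_weight_finite:
  fixes f w :: "'a \<Rightarrow> real"
  assumes [measurable]: "f \<in> borel_measurable M" "w \<in> borel_measurable M" "T \<in> sets M"
    and w: "\<forall>x\<in>T. 0 \<le> w x" and qr: "0 \<le> q" "q \<le> r"
    and fin: "(\<integral>\<^sup>+x\<in>T. ennreal (w x) \<partial>M) < \<infinity>"
      "(\<integral>\<^sup>+x\<in>T. ennreal (\<bar>f x\<bar> powr r * w x) \<partial>M) < \<infinity>"
  shows "(\<integral>\<^sup>+x\<in>T. ennreal (\<bar>f x\<bar> powr q * w x) \<partial>M) < \<infinity>"
proof -
  have "ennreal (\<bar>f x\<bar> powr q * w x) * indicator T x
      \<le> ennreal (w x) * indicator T x + ennreal (\<bar>f x\<bar> powr r * w x) * indicator T x" for x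
  proof (cases "x \<in> T")
    case True
    have "\<bar>f x\<bar> powr q * w x \<le> (1 + \<bar>f x\<bar> powr r) * w x"
      using powr_le_one_plus_powr[of "\<bar>f x\<bar>" q r] qr w True by (intro mult_right_mono) auto
    then have "\<bar>f x\<bar> powr q * w x \<le> w x + \<bar>f x\<bar> powr r * w x"
      by (simp add: algebra_simps)
    then show ?thesis
      using w True by (simp add: ennreal_plus[symmetric] ennreal_leI del: ennreal_plus)
  qed simp
  then have "(\<integral>\<^sup>+x\<in>T. ennreal (\<bar>f x\<bar> powr q * w x) \<partial>M)
      \<le> (\<integral>\<^sup>+x\<in>T. ennreal (w x) \<partial>M) + (\<integral>\<^sup>+x\<in>T. ennreal (\<bar>f x\<bar> powr r * w x) \<partial>M)"
    by (subst nn_integral_add[symmetric]) (auto intro: nn_integral_mono)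
  also have "\<dots> < \<infinity>" using fin by (simp add: ennreal_add_less_top)
  finally show ?thesis .
qed

lemma epowr_ennreal: "0 < e \<Longrightarrow> 0 \<le> w \<Longrightarrow> epowr (ennreal w) e = ennreal (w powr e)"
  by (simp add: epowr_def)

lemma epowr_ennreal_pos_base: "0 < w \<Longrightarrow> epowr (ennreal w) e = ennreal (w powr e)"
  by (simp add: epowr_def)

lemma epowr_top: "0 < e \<Longrightarrow> epowr top e = top"
  by (simp add: epowr_def)

lemma epowr_zero_pos: "0 < e \<Longrightarrow> epowr 0 e = 0"
  by (simp add: epowr_def)

lemma epowr_zero_neg: "e < 0 \<Longrightarrow> epowr 0 e = top"
  by (simp add: epowr_def)

lemma epowr_pos: "0 < a \<Longrightarrow> 0 < e \<Longrightarrow> 0 < epowr a e"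
  by (auto simp: epowr_def enn2real_positive_iff enn2real_eq_0_iff)

lemma epowr_neg_pos: "e < 0 \<Longrightarrow> 0 < epowr (ennreal w) e"
  by (auto simp: epowr_def enn2real_eq_0_iff)

lemma epowr_mono:
  assumes "0 < e" "a \<le> b"
  shows "epowr a e \<le> epowr b e"
proof (cases "b = \<infinity>")
  case False
  with assms have "a \<noteq> \<infinity>" by (auto simp: top_unique)
  with assms False show ?thesis
    by (auto simp: epowr_def top.not_eq_extremum intro!: ennreal_leI powr_mono2 enn2real_mono)
qed (use assms in \<open>simp add: epowr_def\<close>)

lemma borel_measurable_epowr [measurable]:
  assumes "f \<in> borel_measurable M"
  shows "(\<lambda>x. epowr (ennreal (f x)) e) \<in> borel_measurable M"
proof -
  have "(\<lambda>x. epowr (ennreal (f x)) e) = (\<lambda>x. if e = 0 then 1 else if 0 < e then ennreal (max 0 (f x) powr e)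
     else if f x \<le> 0 then \<infinity> else ennreal (max 0 (f x) powr e))"
    by (auto simp: epowr_def max_def ennreal_eq_0_iff ennreal_neg)
  then show ?thesis using assms by simp
qed

lemma epowr_mult_epowr:
  assumes q: "0 < q"
  shows "epowr (a * epowr v q) (1 / q) = epowr a (1 / q) * v"
proof -
  consider "a = 0 \<or> v = 0" | "a = \<infinity> \<or> v = \<infinity>" "a \<noteq> 0" "v \<noteq> 0"
    | a' v' where "a = ennreal a'" "v = ennreal v'" "0 < a'" "0 < v'"
    by (cases a rule: ennreal_cases; cases v rule: ennreal_cases) (auto simp: le_less)
  then show ?thesis
  proof cases
    case 1
    with q show ?thesis by (auto simp: epowr_zero_pos)
  next
    case 2
    with q have "0 < epowr a (1 / q)" "0 < epowr v q"
      using epowr_pos[of a "1 / q"] epowr_pos[of v q] by (simp_all add: zero_less_iff_neq_zero)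
    with 2 q show ?thesis by (auto simp: epowr_top)
  next
    case 3
    with q show ?thesis
      by (simp add: epowr_ennreal ennreal_mult[symmetric] powr_mult powr_powr)
  qed
qed

definition nn_set_average :: "'a measure \<Rightarrow> 'a set \<Rightarrow> ('a \<Rightarrow> ennreal) \<Rightarrow> ennreal" where
  "nn_set_average M T f = (\<integral>\<^sup>+x\<in>T. f x \<partial>M) / emeasure M T"

lemma eavg_eq_nn_set_average: "eavg \<alpha> T f = nn_set_average (nu_alpha \<alpha>) T f"
  by (simp add: eavg_def nn_set_average_def)

lemma nn_set_average_cong:
  assumes "\<And>x. x \<in> T \<Longrightarrow> f x = g x"
  shows "nn_set_average M T f = nn_set_average M T g"
  unfolding nn_set_average_def using assms by (metis IntD2 set_nn_integral_cong)

lemma ennreal_set_average_le_nn_set_average: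
  fixes f :: "'a \<Rightarrow> real"
  shows "ennreal ((\<integral>x\<in>T. f x \<partial>M) / measure M T) \<le> nn_set_average M T (\<lambda>x. ennreal \<bar>f x\<bar>)"
proof (cases "0 \<le> (\<integral>x\<in>T. f x \<partial>M) \<and> 0 < measure M T")
  case True
  then have "emeasure M T = ennreal (measure M T)"
    by (intro emeasure_eq_ennreal_measure) (auto simp: measure_def)
  with True have "ennreal ((\<integral>x\<in>T. f x \<partial>M) / measure M T) = ennreal (\<integral>x\<in>T. f x \<partial>M) / emeasure M T"
    by (simp add: divide_ennreal)
  also have "\<dots> \<le> nn_set_average M T (\<lambda>x. ennreal \<bar>f x\<bar>)"
    unfolding nn_set_average_def by (intro divide_right_mono_ennreal ennreal_set_lebesgue_integral_le)
  finally show ?thesis .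
next
  case False
  then have "(\<integral>x\<in>T. f x \<partial>M) / measure M T \<le> 0"
    using measure_nonneg[of M T] by (auto simp: divide_nonpos_nonneg less_le)
  then show ?thesis by (simp add: ennreal_neg)
qed

lemma measure_pos_if_set_average_pos:
  assumes "0 < (\<integral>x\<in>T. f x \<partial>M) / measure M T"
  shows "0 < measure M T" "T \<in> sets M" "emeasure M T = ennreal (measure M T)"
proof -
  show pos: "0 < measure M T"
    using assms measure_nonneg[of M T] by (auto simp: zero_less_divide_iff)
  then show "T \<in> sets M"
    using measure_notin_sets by force
  from pos show "emeasure M T = ennreal (measure M T)"
    by (intro emeasure_eq_ennreal_measure) (auto simp: measure_def)
qed

lemma inverse_epowr_divide_le:
  fixes w a \<phi> :: real
  assumes w: "0 \<le> w" and a: "0 < a" "ennreal a \<le> m" and \<phi>: "0 < \<phi>" "\<phi> < 1"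
  shows "inverse (epowr (m / ennreal w) \<phi> * ennreal w) \<le> ennreal (a powr - \<phi>) * epowr (ennreal w) (\<phi> - 1)"
proof (cases "w = 0")
  case True
  with a \<phi> show ?thesis
    by (simp add: epowr_zero_neg ennreal_mult_top)
next
  case False
  with w have w_pos: "0 < w" by simp
  show ?thesis
  proof (cases "m = \<infinity>")
    case True
    with w_pos \<phi> show ?thesis
      by (simp add: epowr_top ennreal_top_divide)
  next
    case False
    then obtain m' where m: "m = ennreal m'" "0 \<le> m'"
      by (cases m rule: ennreal_cases) auto
    with a have "a \<le> m'" "0 < m'" by (simp_all add: ennreal_le_iff)
    have "inverse ((m' / w) powr \<phi> * w) = m' powr - \<phi> * w powr (\<phi> - 1)"
      using w_pos \<open>0 < m'\<close> by (simp add: powr_divide powr_minus powr_diff field_simps)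
    moreover have "inverse (epowr (m / ennreal w) \<phi> * ennreal w) = ennreal (inverse ((m' / w) powr \<phi> * w))"
      using m w_pos \<open>0 < m'\<close> \<phi> by (simp add: divide_ennreal epowr_ennreal ennreal_mult[symmetric] inverse_ennreal)
    moreover have "m' powr - \<phi> * w powr (\<phi> - 1) \<le> a powr - \<phi> * w powr (\<phi> - 1)"
      using \<open>a \<le> m'\<close> a \<phi> by (intro mult_right_mono powr_mono2') auto
    ultimately show ?thesis
      using w_pos by (simp add: epowr_ennreal_pos_base ennreal_mult[symmetric] ennreal_leI)
  qed
qed

lemma nn_set_average_inverse_epowr_divide_le:
  fixes \<omega> :: "'a \<Rightarrow> real" and Mf :: "'a \<Rightarrow> ennreal"
  assumes [measurable]: "\<omega> \<in> borel_measurable M" "T \<in> sets M"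
    and \<omega>: "\<forall>x\<in>T. 0 \<le> \<omega> x" and a: "0 < a" "\<forall>x\<in>T. ennreal a \<le> Mf x" and \<phi>: "0 < \<phi>" "\<phi> < 1"
  shows "nn_set_average M T (\<lambda>x. inverse (epowr (Mf x / ennreal (\<omega> x)) \<phi> * ennreal (\<omega> x)))
    \<le> ennreal (a powr - \<phi>) * nn_set_average M T (\<lambda>x. epowr (ennreal (\<omega> x)) (\<phi> - 1))"
proof -
  have "(\<integral>\<^sup>+x\<in>T. inverse (epowr (Mf x / ennreal (\<omega> x)) \<phi> * ennreal (\<omega> x)) \<partial>M)
      \<le> (\<integral>\<^sup>+x. ennreal (a powr - \<phi>) * (epowr (ennreal (\<omega> x)) (\<phi> - 1) * indicator T x) \<partial>M)"
    using \<omega> a \<phi> by (intro nn_integral_mono) (auto split: split_indicator intro: inverse_epowr_divide_le)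
  also have "\<dots> = ennreal (a powr - \<phi>) * (\<integral>\<^sup>+x\<in>T. epowr (ennreal (\<omega> x)) (\<phi> - 1) \<partial>M)"
    by (rule nn_integral_cmult) measurable
  finally show ?thesis
    unfolding nn_set_average_def ennreal_times_divide by (rule divide_right_mono_ennreal)
qed

lemma nn_set_average_mult_average_inverse_S_le_finite:
  fixes \<mu> :: "'a measure" and h \<omega> :: "'a \<Rightarrow> real" and Mf :: "'a \<Rightarrow> ennreal"
  assumes [measurable]: "h \<in> borel_measurable \<mu>" "\<omega> \<in> borel_measurable \<mu>" "T \<in> sets \<mu>"
    and T: "emeasure \<mu> T = ennreal t" "0 < t"
    and \<omega>: "\<forall>x\<in>T. 0 \<le> \<omega> x" and \<phi>: "0 < \<phi>" "\<phi> < 1"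
    and X: "(\<integral>\<^sup>+x\<in>T. ennreal (\<bar>h x\<bar> powr (1 / \<phi>) * \<omega> x) \<partial>\<mu>) = ennreal x" "0 < x"
    and Y: "(\<integral>\<^sup>+x\<in>T. ennreal (\<omega> x) \<partial>\<mu>) = ennreal y" "0 < y"
    and Mf: "\<forall>z\<in>T. ennreal (x / t) \<le> Mf z"
  shows "nn_set_average \<mu> T (\<lambda>x. ennreal (\<bar>h x\<bar> * \<omega> x))
      * nn_set_average \<mu> T (\<lambda>x. inverse (epowr (Mf x / ennreal (\<omega> x)) \<phi> * ennreal (\<omega> x)))
    \<le> ennreal ((y / t) powr (1 - \<phi>)) * nn_set_average \<mu> T (\<lambda>x. epowr (ennreal (\<omega> x)) (\<phi> - 1))"
proof -
  have "nn_set_average \<mu> T (\<lambda>x. ennreal (\<bar>h x\<bar> * \<omega> x)) \<le> ennreal (x powr \<phi> * y powr (1 - \<phi>)) / ennreal t"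
    unfolding nn_set_average_def T(1)
    using \<omega> \<phi> X Y by (intro divide_right_mono_ennreal nn_set_integral_Holder_weight) auto
  also have "\<dots> = ennreal (x powr \<phi> * y powr (1 - \<phi>) / t)"
    using T by (simp add: divide_ennreal)
  finally have Holder: "nn_set_average \<mu> T (\<lambda>x. ennreal (\<bar>h x\<bar> * \<omega> x)) \<le> \<dots>" .
  have maximal: "nn_set_average \<mu> T (\<lambda>x. inverse (epowr (Mf x / ennreal (\<omega> x)) \<phi> * ennreal (\<omega> x)))
      \<le> ennreal ((x / t) powr - \<phi>) * nn_set_average \<mu> T (\<lambda>x. epowr (ennreal (\<omega> x)) (\<phi> - 1))"
    using \<omega> X(2) T(2) Mf \<phi> by (intro nn_set_average_inverse_epowr_divide_le) auto
  have "nn_set_average \<mu> T (\<lambda>x. ennreal (\<bar>h x\<bar> * \<omega> x))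
      * nn_set_average \<mu> T (\<lambda>x. inverse (epowr (Mf x / ennreal (\<omega> x)) \<phi> * ennreal (\<omega> x)))
    \<le> ennreal (x powr \<phi> * y powr (1 - \<phi>) / t)
      * (ennreal ((x / t) powr - \<phi>) * nn_set_average \<mu> T (\<lambda>x. epowr (ennreal (\<omega> x)) (\<phi> - 1)))"
    by (rule mult_mono[OF Holder maximal]) auto
  also have "\<dots> = ennreal (x powr \<phi> * y powr (1 - \<phi>) / t * (x / t) powr - \<phi>)
      * nn_set_average \<mu> T (\<lambda>x. epowr (ennreal (\<omega> x)) (\<phi> - 1))"
    using X(2) Y(2) T(2) by (simp add: ennreal_mult[symmetric] mult.assoc[symmetric])
  also have "x powr \<phi> * y powr (1 - \<phi>) / t * (x / t) powr - \<phi> = (y / t) powr (1 - \<phi>)"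
    using X(2) Y(2) T(2) by (simp add: powr_divide powr_minus powr_diff field_simps)
  finally show ?thesis .
qed

lemma nn_set_average_epowr_neg_pos:
  fixes \<omega> :: "'a \<Rightarrow> real"
  assumes [measurable]: "\<omega> \<in> borel_measurable M" "T \<in> sets M"
    and T: "emeasure M T = ennreal t" "0 < t" and e: "e < 0"
  shows "0 < nn_set_average M T (\<lambda>x. epowr (ennreal (\<omega> x)) e)"
proof -
  have "0 < (\<integral>\<^sup>+x\<in>T. epowr (ennreal (\<omega> x)) e \<partial>M)"
  proof (rule nn_set_integral_pos_transfer[where f = "\<lambda>_. 1"])
    show "\<forall>x\<in>T. epowr (ennreal (\<omega> x)) e = 0 \<longrightarrow> (1::ennreal) = 0"
      using epowr_neg_pos[OF e] by (simp add: zero_less_iff_neq_zero)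
    show "0 < (\<integral>\<^sup>+x\<in>T. 1 \<partial>M)"
      using T by simp
  qed measurable
  with T show ?thesis
    by (simp add: nn_set_average_def ennreal_zero_less_divide)
qed

lemma nn_set_average_mult_average_inverse_S_le:
  fixes \<mu> :: "'a measure" and h \<omega> :: "'a \<Rightarrow> real" and Mf :: "'a \<Rightarrow> ennreal"
  assumes h_meas [measurable]: "h \<in> borel_measurable \<mu>" and \<omega>_meas [measurable]: "\<omega> \<in> borel_measurable \<mu>"
    and T_meas [measurable]: "T \<in> sets \<mu>" and T: "emeasure \<mu> T = ennreal t" "0 < t"
    and \<omega>: "\<forall>x\<in>T. 0 \<le> \<omega> x" and \<phi>: "0 < \<phi>" "\<phi> < 1"
    and r: "1 / \<phi> \<le> r" and Lr: "(\<integral>\<^sup>+x\<in>T. ennreal (\<bar>h x\<bar> powr r * \<omega> x) \<partial>\<mu>) < \<infinity>"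
    and Mf: "\<forall>z\<in>T. nn_set_average \<mu> T (\<lambda>x. ennreal (\<bar>h x\<bar> powr (1 / \<phi>) * \<omega> x)) \<le> Mf z"
    and J: "0 < (\<integral>\<^sup>+x\<in>T. ennreal (\<bar>h x\<bar> * \<omega> x) \<partial>\<mu>)"
  shows "nn_set_average \<mu> T (\<lambda>x. ennreal (\<bar>h x\<bar> * \<omega> x))
      * nn_set_average \<mu> T (\<lambda>x. inverse (epowr (Mf x / ennreal (\<omega> x)) \<phi> * ennreal (\<omega> x)))
    \<le> epowr (nn_set_average \<mu> T (\<lambda>x. ennreal (\<omega> x))) (1 - \<phi>)
      * nn_set_average \<mu> T (\<lambda>x. epowr (ennreal (\<omega> x)) (\<phi> - 1))"
proof (cases "(\<integral>\<^sup>+x\<in>T. ennreal (\<omega> x) \<partial>\<mu>) = \<infinity>")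
  case True
  with T have "nn_set_average \<mu> T (\<lambda>x. ennreal (\<omega> x)) = \<infinity>"
    by (simp add: nn_set_average_def ennreal_top_divide)
  moreover have "0 < nn_set_average \<mu> T (\<lambda>x. epowr (ennreal (\<omega> x)) (\<phi> - 1))"
    using T \<phi> by (intro nn_set_average_epowr_neg_pos) auto
  ultimately show ?thesis
    using \<phi> by (simp add: epowr_top ennreal_top_mult zero_less_iff_neq_zero)
next
  case False
  have "0 < (\<integral>\<^sup>+x\<in>T. ennreal (\<omega> x) \<partial>\<mu>)"
  proof (rule nn_set_integral_pos_transfer[OF _ _ _ _ J])
    show "\<forall>x\<in>T. ennreal (\<omega> x) = 0 \<longrightarrow> ennreal (\<bar>h x\<bar> * \<omega> x) = 0"
      using \<omega> by auto
  qed measurable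
  with False obtain y where Y: "(\<integral>\<^sup>+x\<in>T. ennreal (\<omega> x) \<partial>\<mu>) = ennreal y" "0 < y"
    by (cases "(\<integral>\<^sup>+x\<in>T. ennreal (\<omega> x) \<partial>\<mu>)" rule: ennreal_cases) auto
  have "(\<integral>\<^sup>+x\<in>T. ennreal (\<bar>h x\<bar> powr (1 / \<phi>) * \<omega> x) \<partial>\<mu>) < \<infinity>"
    using \<phi>(1) r Y(1)
    by (intro nn_set_integral_powr_weight_finite[OF h_meas \<omega>_meas T_meas \<omega> _ _ _ Lr]) auto
  moreover have "0 < (\<integral>\<^sup>+x\<in>T. ennreal (\<bar>h x\<bar> powr (1 / \<phi>) * \<omega> x) \<partial>\<mu>)"
  proof (rule nn_set_integral_pos_transfer[OF _ _ _ _ J])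
    show "\<forall>x\<in>T. ennreal (\<bar>h x\<bar> powr (1 / \<phi>) * \<omega> x) = 0 \<longrightarrow> ennreal (\<bar>h x\<bar> * \<omega> x) = 0"
      using \<omega> by (auto simp: ennreal_eq_0_iff mult_le_0_iff)
  qed measurable
  ultimately obtain x where X: "(\<integral>\<^sup>+x\<in>T. ennreal (\<bar>h x\<bar> powr (1 / \<phi>) * \<omega> x) \<partial>\<mu>) = ennreal x" "0 < x"
    by (cases "(\<integral>\<^sup>+x\<in>T. ennreal (\<bar>h x\<bar> powr (1 / \<phi>) * \<omega> x) \<partial>\<mu>)" rule: ennreal_cases) auto
  have "\<forall>z\<in>T. ennreal (x / t) \<le> Mf z"
    using Mf X T by (simp add: nn_set_average_def divide_ennreal)
  moreover have "ennreal ((y / t) powr (1 - \<phi>)) = epowr (nn_set_average \<mu> T (\<lambda>x. ennreal (\<omega> x))) (1 - \<phi>)"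
    using Y T \<phi>(2) by (simp add: nn_set_average_def divide_ennreal epowr_ennreal)
  ultimately show ?thesis
    using nn_set_average_mult_average_inverse_S_le_finite[OF h_meas \<omega>_meas T_meas T \<omega> \<phi> X Y] by simp
qed

lemma phi_gt_0: "2 < p \<Longrightarrow> 0 < phi p"
  by (simp add: phi_def)

lemma phi_less_1: "2 < p \<Longrightarrow> phi p < 1"
  by (simp add: phi_def)

lemma phi_minus_1: "1 < p \<Longrightarrow> phi p - 1 = 1 - p / (p - 1)"
  by (simp add: phi_def field_simps)

lemma one_minus_phi: "1 < p \<Longrightarrow> 1 - phi p = 1 / (p - 1)"
  by (simp add: phi_def field_simps)

lemma set_average_mult_average_inverse_S_le_measurable:
  fixes \<mu> :: "'a measure" and h \<omega> :: "'a \<Rightarrow> real" and Mf :: "'a \<Rightarrow> ennreal"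
  assumes p: "2 < p"
    and h_meas [measurable]: "h \<in> borel_measurable \<mu>" and \<omega>_meas [measurable]: "\<omega> \<in> borel_measurable \<mu>"
    and \<omega>: "\<forall>x\<in>T. 0 \<le> \<omega> x"
    and r: "1 / phi p \<le> r" and Lr: "(\<integral>\<^sup>+x\<in>T. ennreal (\<bar>h x\<bar> powr r * \<omega> x) \<partial>\<mu>) < \<infinity>"
    and Mf: "\<forall>z\<in>T. nn_set_average \<mu> T (\<lambda>x. ennreal (\<bar>h x\<bar> powr (1 / phi p) * \<omega> x)) \<le> Mf z"
  shows "ereal ((\<integral>x\<in>T. h x * \<omega> x \<partial>\<mu>) / measure \<mu> T)
      * enn2ereal (nn_set_average \<mu> T (\<lambda>x. inverse (epowr (Mf x / ennreal (\<omega> x)) (phi p) * ennreal (\<omega> x))))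
    \<le> enn2ereal (epowr (nn_set_average \<mu> T (\<lambda>x. ennreal (\<omega> x))
      * epowr (nn_set_average \<mu> T (\<lambda>x. epowr (ennreal (\<omega> x)) (1 - p / (p - 1)))) (p - 1)) (1 / (p - 1)))"
    (is "ereal ?a * enn2ereal ?\<Psi> \<le> enn2ereal (epowr (?Y * epowr ?V (p - 1)) _)")
proof (cases "0 < ?a")
  case False
  then have "ereal ?a * enn2ereal ?\<Psi> \<le> 0"
    by (simp add: ereal_mult_le_0_iff)
  then show ?thesis
    using enn2ereal_nonneg order_trans by blast
next
  case True
  have \<phi>: "0 < phi p" "phi p < 1" "phi p - 1 = 1 - p / (p - 1)" "1 - phi p = 1 / (p - 1)"
    using p by (simp_all add: phi_gt_0 phi_less_1 phi_minus_1 one_minus_phi)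
  have t: "0 < measure \<mu> T" "T \<in> sets \<mu>" "emeasure \<mu> T = ennreal (measure \<mu> T)"
    using measure_pos_if_set_average_pos[OF True] by simp_all
  have "ennreal ?a \<le> nn_set_average \<mu> T (\<lambda>x. ennreal \<bar>h x * \<omega> x\<bar>)"
    by (rule ennreal_set_average_le_nn_set_average)
  also have "\<dots> = nn_set_average \<mu> T (\<lambda>x. ennreal (\<bar>h x\<bar> * \<omega> x))"
    using \<omega> by (intro nn_set_average_cong) (simp add: abs_mult)
  finally have avg_abs: "ennreal ?a \<le> \<dots>" .
  have "0 < ennreal ?a"
    using True by simp
  also note avg_abs
  finally have "0 < (\<integral>\<^sup>+x\<in>T. ennreal (\<bar>h x\<bar> * \<omega> x) \<partial>\<mu>)"
    by (simp add: nn_set_average_def ennreal_zero_less_divide)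
  note bound = nn_set_average_mult_average_inverse_S_le[OF h_meas \<omega>_meas t(2,3,1) \<omega> \<phi>(1,2) r Lr Mf this]
  have "ennreal ?a * ?\<Psi> \<le> nn_set_average \<mu> T (\<lambda>x. ennreal (\<bar>h x\<bar> * \<omega> x)) * ?\<Psi>"
    by (rule mult_right_mono[OF avg_abs]) simp
  also have "\<dots> \<le> epowr ?Y (1 / (p - 1)) * ?V"
    using bound unfolding \<phi>(3,4) .
  also have "\<dots> = epowr (?Y * epowr ?V (p - 1)) (1 / (p - 1))"
    using p by (simp add: epowr_mult_epowr)
  finally have "ennreal ?a * ?\<Psi> \<le> epowr (?Y * epowr ?V (p - 1)) (1 / (p - 1))" .
  moreover have "ereal ?a * enn2ereal ?\<Psi> = enn2ereal (ennreal ?a * ?\<Psi>)"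
    using True by (simp add: times_ennreal.rep_eq)
  ultimately show ?thesis
    by (simp add: less_eq_ennreal.rep_eq[symmetric])
qed

lemma set_average_mult_average_inverse_S_le:
  fixes \<mu> :: "'a measure" and h \<omega> h' \<omega>' :: "'a \<Rightarrow> real" and Mf :: "'a \<Rightarrow> ennreal"
  assumes p: "2 < p"
    and h': "h' \<in> borel_measurable \<mu>" "\<forall>x\<in>T. h' x = h x"
    and \<omega>': "\<omega>' \<in> borel_measurable \<mu>" "\<forall>x\<in>T. \<omega>' x = \<omega> x"
    and \<omega>: "\<forall>x\<in>T. 0 \<le> \<omega> x"
    and r: "1 / phi p \<le> r" and Lr: "(\<integral>\<^sup>+x\<in>T. ennreal (\<bar>h x\<bar> powr r * \<omega> x) \<partial>\<mu>) < \<infinity>"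
    and Mf: "\<forall>z\<in>T. nn_set_average \<mu> T (\<lambda>x. ennreal (\<bar>h x\<bar> powr (1 / phi p) * \<omega> x)) \<le> Mf z"
  shows "ereal ((\<integral>x\<in>T. h x * \<omega> x \<partial>\<mu>) / measure \<mu> T)
      * enn2ereal (nn_set_average \<mu> T (\<lambda>x. inverse (epowr (Mf x / ennreal (\<omega> x)) (phi p) * ennreal (\<omega> x))))
    \<le> enn2ereal (epowr (nn_set_average \<mu> T (\<lambda>x. ennreal (\<omega> x))
      * epowr (nn_set_average \<mu> T (\<lambda>x. epowr (ennreal (\<omega> x)) (1 - p / (p - 1)))) (p - 1)) (1 / (p - 1)))"
proof -
  have "(\<integral>x\<in>T. h' x * \<omega>' x \<partial>\<mu>) = (\<integral>x\<in>T. h x * \<omega> x \<partial>\<mu>)"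
    unfolding set_lebesgue_integral_def
    using h' \<omega>' by (intro Bochner_Integration.integral_cong) (auto split: split_indicator)
  moreover have "(\<integral>\<^sup>+x\<in>T. ennreal (\<bar>h' x\<bar> powr r * \<omega>' x) \<partial>\<mu>) = (\<integral>\<^sup>+x\<in>T. ennreal (\<bar>h x\<bar> powr r * \<omega> x) \<partial>\<mu>)"
    using h' \<omega>' by (intro set_nn_integral_cong) auto
  moreover have "\<And>x. x \<in> T \<Longrightarrow> h' x = h x" "\<And>x. x \<in> T \<Longrightarrow> \<omega>' x = \<omega> x"
    using h' \<omega>' by auto
  ultimately show ?thesis
    using set_average_mult_average_inverse_S_le_measurable[OF p h'(1) \<omega>'(1) _ r, of T Mf] \<omega> Lr Mf
    by (simp cong: nn_set_average_cong)
qed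

lemma weight_measurable_on_ball:
  "weight \<omega> \<Longrightarrow> (\<lambda>x. indicator (ball 0 1) x * \<omega> x) \<in> borel_measurable (nu_alpha \<alpha>)"
  using borel_measurable_integrable by (fastforce simp: weight_def set_integrable_def nu_alpha_def)

lemma in_Lq_w_measurable_on_ball:
  "in_Lq_w q \<alpha> \<omega> h \<Longrightarrow> (\<lambda>x. indicator (ball 0 1) x * h x) \<in> borel_measurable (nu_alpha \<alpha>)"
  by (simp add: in_Lq_w_def nu_alpha_def)

lemma in_Lq_w_set_nn_integral_finite:
  "in_Lq_w q \<alpha> \<omega> h \<Longrightarrow> (\<integral>\<^sup>+x\<in>T. ennreal (\<bar>h x\<bar> powr q * \<omega> x) \<partial>nu_alpha \<alpha>) < \<infinity>"
  unfolding in_Lq_w_def by (auto intro: le_less_trans[OF nn_integral_mono] split: split_indicator)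

lemma nn_set_average_le_Malpha:
  assumes "B \<in> sphere_balls" "z \<in> tent B" "\<forall>x\<in>tent B. 0 \<le> \<omega> x" "0 < e"
  shows "nn_set_average (nu_alpha \<alpha>) (tent B) (\<lambda>x. ennreal (\<bar>h x\<bar> powr e * \<omega> x))
    \<le> Malpha \<alpha> (\<lambda>y. epowr (ennreal \<bar>h y\<bar>) e * ennreal (\<omega> y)) z"
proof -
  have "nn_set_average (nu_alpha \<alpha>) (tent B) (\<lambda>x. ennreal (\<bar>h x\<bar> powr e * \<omega> x))
      = eavg \<alpha> (tent B) (\<lambda>y. epowr (ennreal \<bar>h y\<bar>) e * ennreal (\<omega> y))"
    unfolding eavg_eq_nn_set_average
    using assms(3,4) by (intro nn_set_average_cong) (simp add: epowr_ennreal ennreal_mult)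
  also have "\<dots> \<le> Malpha \<alpha> (\<lambda>y. epowr (ennreal \<bar>h y\<bar>) e * ennreal (\<omega> y)) z"
    unfolding Malpha_def using assms(1,2) by (intro SUP_upper2) auto
  finally show ?thesis .
qed

lemma eavg_mult_eavg_le_Bchar:
  "B \<in> sphere_balls \<Longrightarrow>
    eavg \<alpha> (tent B) (\<lambda>x. ennreal (\<omega> x))
      * epowr (eavg \<alpha> (tent B) (\<lambda>x. epowr (ennreal (\<omega> x)) (1 - p / (p - 1)))) (p - 1)
    \<le> Bchar p \<alpha> \<omega>"
  unfolding Bchar_def Let_def by (rule SUP_upper)

theorem lemma3p5:
  fixes p \<alpha> :: real and \<omega> h :: "real^'n \<Rightarrow> real" and B :: "(real^'n) set"
  assumes "CARD('n) \<ge> 3"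
    and "2 < p" and "-1 < \<alpha>"
    and "weight \<omega>"
    and "in_Lq_w ((p / (p - 1)) / phi p) \<alpha> \<omega> h"
    and "B \<in> sphere_balls"
  shows "ereal ((\<integral>x\<in>tent B. h x * \<omega> x \<partial>nu_alpha \<alpha>) / measure (nu_alpha \<alpha>) (tent B))
           * enn2ereal (eavg \<alpha> (tent B) (\<lambda>x. inverse (Sop p \<alpha> \<omega> h x * ennreal (\<omega> x))))
         \<le> enn2ereal (epowr (Bchar p \<alpha> \<omega>) (1 / (p - 1)))"
proof -
  have T_ball: "tent B \<subseteq> ball 0 1"
    by (auto simp: tent_def)
  then have \<omega>: "\<forall>x\<in>tent B. 0 \<le> \<omega> x"
    using assms(4) by (auto simp: weight_def)
  have "1 / phi p \<le> (p / (p - 1)) / phi p"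
    using assms(2) phi_gt_0[OF assms(2)] by (intro divide_right_mono) (auto simp: le_divide_eq)
  then have "ereal ((\<integral>x\<in>tent B. h x * \<omega> x \<partial>nu_alpha \<alpha>) / measure (nu_alpha \<alpha>) (tent B))
      * enn2ereal (eavg \<alpha> (tent B) (\<lambda>x. inverse (Sop p \<alpha> \<omega> h x * ennreal (\<omega> x))))
    \<le> enn2ereal (epowr (eavg \<alpha> (tent B) (\<lambda>x. ennreal (\<omega> x))
      * epowr (eavg \<alpha> (tent B) (\<lambda>x. epowr (ennreal (\<omega> x)) (1 - p / (p - 1)))) (p - 1)) (1 / (p - 1)))"
    unfolding eavg_eq_nn_set_average Sop_def
    using T_ball \<omega> nn_set_average_le_Malpha[OF assms(6) _ \<omega>] phi_gt_0[OF assms(2)]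
      in_Lq_w_set_nn_integral_finite[OF assms(5)]
    by (intro set_average_mult_average_inverse_S_le[OF assms(2) in_Lq_w_measurable_on_ball[OF assms(5)] _
          weight_measurable_on_ball[OF assms(4)]]) auto
  also have "\<dots> \<le> enn2ereal (epowr (Bchar p \<alpha> \<omega>) (1 / (p - 1)))"
    using assms(2) eavg_mult_eavg_le_Bchar[OF assms(6)]
    by (simp add: less_eq_ennreal.rep_eq[symmetric] epowr_mono)
  finally show ?thesis .
qed

end
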